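(* Let $P$ be any finite poset. For $x\in P$ let $C(x)$ be the size of the largest chain containing $x$ and $A(x)$ the size of the largest antichain containing $x$. Then \[ \sum_{x\in P}\frac{1}{A(x)\,C(x)}\le 1. \]
   Context: A chain in a poset is a set of pairwise comparable elements; an antichain is a set of pairwise incomparable elements. *)

theory Defs
  imports Complex_Main
begin

definition is_chain :: "'a set \<Rightarrow> 'a rel \<Rightarrow> 'a set \<Rightarrow> bool" where
  "is_chain P r S \<longleftrightarrow> S \<subseteq> P \<and> (\<forall>x\<in>S. \<forall>y\<in>S. (x, y) \<in> r \<or> (y, x) \<in> r)"

definition is_antichain :: "'a set \<Rightarrow> 'a rel \<Rightarrow> 'a set \<Rightarrow> bool" where
  "is_antichain P r S \<longleftrightarrow> S \<subseteq> P \<and>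
     (\<forall>x\<in>S. \<forall>y\<in>S. x \<noteq> y \<longrightarrow> (x, y) \<notin> r \<and> (y, x) \<notin> r)"

definition max_chain_through :: "'a set \<Rightarrow> 'a rel \<Rightarrow> 'a \<Rightarrow> nat" where
  "max_chain_through P r x = Max {card S | S. is_chain P r S \<and> x \<in> S}"

definition max_antichain_through :: "'a set \<Rightarrow> 'a rel \<Rightarrow> 'a \<Rightarrow> nat" where
  "max_antichain_through P r x = Max {card S | S. is_antichain P r S \<and> x \<in> S}"

end

theory Submission
  imports Defs
begin

text \<open>Let h(x) be the length of the longest chain with top x. The half-open intervals
  [(h(x) - 1)/C(x), h(x)/C(x)) lie in [0, 1), have length 1/C(x), and are pairwise disjoint
  for comparable elements, because h(x)/C(x) \<le> (h(y) - 1)/C(y) whenever x < y. Hence the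
  elements whose interval contains a given point form an antichain S, and for each of them
  A(x) \<ge> |S|, so the weights 1/A(x) sum to at most 1 over every point. Integrating over
  [0, 1) gives the claim; the integral is discretised by scaling all intervals by the product
  of the C(x).\<close>

lemma finite_card_set:
  assumes "finite P" "\<And>S. Q S \<Longrightarrow> S \<subseteq> P"
  shows "finite {card S | S. Q S}"
proof -
  have "{card S | S. Q S} \<subseteq> card ` Pow P" using assms(2) by auto
  then show ?thesis using assms(1) by (meson finite_subset finite_imageI finite_Pow_iff)
qed

lemma card_le_Max_card:
  assumes "finite P" "\<And>S. Q S \<Longrightarrow> S \<subseteq> P" "Q S"
  shows "card S \<le> Max {card S | S. Q S}"
  using finite_card_set[OF assms(1,2)] assms(3) by (intro Max_ge) auto

lemma Max_card_attained:
  assumes "finite P" "\<And>S. Q S \<Longrightarrow> S \<subseteq> P" "Q S0"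
  shows "\<exists>S. Q S \<and> card S = Max {card S | S. Q S}"
proof -
  have "Max {card S | S. Q S} \<in> {card S | S. Q S}"
    using finite_card_set[OF assms(1,2)] assms(3) by (intro Max_in) auto
  then show ?thesis by auto
qed

lemma is_chain_converse: "is_chain P (r\<inverse>) S \<longleftrightarrow> is_chain P r S"
  unfolding is_chain_def by auto

definition height :: "'a set \<Rightarrow> 'a rel \<Rightarrow> 'a \<Rightarrow> nat" where
  "height P r x = Max {card S | S. is_chain P r S \<and> x \<in> S \<and> (\<forall>y\<in>S. (y, x) \<in> r)}"

definition depth :: "'a set \<Rightarrow> 'a rel \<Rightarrow> 'a \<Rightarrow> nat" where
  "depth P r = height P (r\<inverse>)"

text \<open>The interval [(a - 1)/c, a/c), scaled by a common multiple M of the denominators.\<close>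

definition scaled_interval :: "nat \<Rightarrow> nat \<Rightarrow> nat \<Rightarrow> nat set" where
  "scaled_interval M a c = {(a - 1) * (M div c) ..< a * (M div c)}"

lemma card_scaled_interval: "1 \<le> a \<Longrightarrow> card (scaled_interval M a c) = M div c"
  unfolding scaled_interval_def by (cases a) simp_all

lemma scaled_interval_subset:
  assumes "c dvd M" "a \<le> c"
  shows "scaled_interval M a c \<subseteq> {..<M}"
proof -
  have "a * (M div c) \<le> c * (M div c)" using assms(2) by simp
  then show ?thesis
    unfolding scaled_interval_def using assms(1) by auto
qed

lemma scaled_intervals_disjoint:
  assumes "c dvd M" "c' dvd M" "0 < M" "a * c' \<le> (a' - 1) * c"
  shows "scaled_interval M a c \<inter> scaled_interval M a' c' = {}"
proof -
  have "(a * (M div c)) * M = (a * c') * (M div c) * (M div c')"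
    using assms(2) by (simp add: ac_simps)
  also have "\<dots> \<le> ((a' - 1) * c) * (M div c) * (M div c')"
    using assms(4) by simp
  also have "\<dots> = ((a' - 1) * (M div c')) * M"
    using assms(1) by (simp add: ac_simps)
  finally have "a * (M div c) \<le> (a' - 1) * (M div c')"
    using assms(3) by simp
  then show ?thesis unfolding scaled_interval_def by auto
qed

lemma sum_inverse_le_1:
  assumes "finite S" "\<And>x. x \<in> S \<Longrightarrow> card S \<le> f x"
  shows "(\<Sum>x\<in>S. 1 / real (f x)) \<le> 1"
proof (cases "S = {}")
  case False
  then have pos: "0 < card S" using assms(1) by (simp add: card_gt_0_iff)
  have "(\<Sum>x\<in>S. 1 / real (f x)) \<le> (\<Sum>x\<in>S. 1 / real (card S))"
    using assms(2) pos by (intro sum_mono frac_le) auto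
  also have "\<dots> = 1" using pos by simp
  finally show ?thesis .
qed simp

lemma sum_card_mult_le_by_double_counting:
  fixes w :: "'a \<Rightarrow> real"
  assumes "finite P" "\<And>x. x \<in> P \<Longrightarrow> I x \<subseteq> {..<M}"
    and "\<And>k. k < M \<Longrightarrow> (\<Sum>x\<in>{x\<in>P. k \<in> I x}. w x) \<le> 1"
  shows "(\<Sum>x\<in>P. real (card (I x)) * w x) \<le> real M"
proof -
  have "(\<Sum>x\<in>P. real (card (I x)) * w x) = (\<Sum>x\<in>P. \<Sum>k<M. if k \<in> I x then w x else 0)"
  proof (rule sum.cong[OF refl])
    fix x assume "x \<in> P"
    then have "{..<M} \<inter> I x = I x" using assms(2) by blast
    then show "real (card (I x)) * w x = (\<Sum>k<M. if k \<in> I x then w x else 0)"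
      by (simp add: sum.If_cases)
  qed
  also have "\<dots> = (\<Sum>k<M. \<Sum>x\<in>{x\<in>P. k \<in> I x}. w x)"
    using assms(1) by (subst sum.swap) (simp add: sum.inter_filter)
  also have "\<dots> \<le> (\<Sum>k<M. 1)"
    using assms(3) by (intro sum_mono) simp
  finally show ?thesis by simp
qed

lemma mult_le_pred_mult_of_bounds:
  fixes a c m d n :: nat
  assumes "a < c" "c \<le> m" "m + 1 \<le> c + d" "a + d \<le> n"
  shows "a * m \<le> (c - 1) * n"
proof -
  define f where "f = c - 1 - a"
  define e where "e = m - (c - 1)"
  have c: "c - 1 = a + f" and m: "m = a + f + e"
    using assms(1,2) unfolding f_def e_def by linarith+
  have "a * m \<le> (a + f) * (a + e)"
    unfolding m by (simp add: algebra_simps)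
  also have "\<dots> \<le> (c - 1) * n"
    unfolding c using assms(3,4) m c by (intro mult_left_mono) linarith+
  finally show ?thesis .
qed

locale finite_partial_order =
  fixes P :: "'a set" and r :: "'a rel"
  assumes finite: "finite P" and partial_order: "partial_order_on P r"
begin

lemma reflexive: "x \<in> P \<Longrightarrow> (x, x) \<in> r"
  using partial_order unfolding partial_order_on_def preorder_on_def refl_on_def by blast

lemma related_in_carrier: "(x, y) \<in> r \<Longrightarrow> x \<in> P \<and> y \<in> P"
  using partial_order unfolding partial_order_on_def preorder_on_def refl_on_def by blast

lemma transitive: "(x, y) \<in> r \<Longrightarrow> (y, z) \<in> r \<Longrightarrow> (x, z) \<in> r"
  using partial_order unfolding partial_order_on_def preorder_on_def trans_def by blast

lemma antisymmetric: "(x, y) \<in> r \<Longrightarrow> (y, x) \<in> r \<Longrightarrow> x = y"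
  using partial_order unfolding partial_order_on_def antisym_def by blast

lemma converse: "finite_partial_order P (r\<inverse>)"
  by unfold_locales (simp_all add: finite partial_order)

lemma is_chain_singleton: "x \<in> P \<Longrightarrow> is_chain P r {x}"
  using reflexive by (auto simp: is_chain_def)

lemma finite_chain: "is_chain P r S \<Longrightarrow> finite S"
  using finite unfolding is_chain_def by (blast intro: finite_subset)

lemma card_le_max_chain_through: "is_chain P r S \<Longrightarrow> x \<in> S \<Longrightarrow> card S \<le> max_chain_through P r x"
  unfolding max_chain_through_def by (rule card_le_Max_card[OF finite]) (auto simp: is_chain_def)

lemma card_le_max_antichain_through:
  "is_antichain P r S \<Longrightarrow> x \<in> S \<Longrightarrow> card S \<le> max_antichain_through P r x"
  unfolding max_antichain_through_def
  by (rule card_le_Max_card[OF finite]) (auto simp: is_antichain_def)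

lemma max_chain_through_attained:
  "x \<in> P \<Longrightarrow> \<exists>S. is_chain P r S \<and> x \<in> S \<and> card S = max_chain_through P r x"
  unfolding max_chain_through_def
  using Max_card_attained[OF finite, of "\<lambda>S. is_chain P r S \<and> x \<in> S" "{x}"] is_chain_singleton
  by (auto simp: is_chain_def)

lemma card_le_height:
  "is_chain P r S \<Longrightarrow> x \<in> S \<Longrightarrow> \<forall>y\<in>S. (y, x) \<in> r \<Longrightarrow> card S \<le> height P r x"
  unfolding height_def by (rule card_le_Max_card[OF finite]) (auto simp: is_chain_def)

lemma height_attained:
  "x \<in> P \<Longrightarrow> \<exists>S. is_chain P r S \<and> x \<in> S \<and> (\<forall>y\<in>S. (y, x) \<in> r) \<and> card S = height P r x"
  unfolding height_def
  using Max_card_attained[OF finite,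
      of "\<lambda>S. is_chain P r S \<and> x \<in> S \<and> (\<forall>y\<in>S. (y, x) \<in> r)" "{x}"] is_chain_singleton reflexive
  by (auto simp: is_chain_def)

lemma height_pos: "x \<in> P \<Longrightarrow> 1 \<le> height P r x"
  using card_le_height[OF is_chain_singleton, of x x] reflexive by simp

lemma height_le_max_chain_through: "x \<in> P \<Longrightarrow> height P r x \<le> max_chain_through P r x"
  using height_attained card_le_max_chain_through by metis

lemma max_chain_through_pos: "x \<in> P \<Longrightarrow> 0 < max_chain_through P r x"
  using height_pos height_le_max_chain_through by (meson less_le_trans zero_less_one)

lemma card_le_depth:
  "is_chain P r T \<Longrightarrow> y \<in> T \<Longrightarrow> \<forall>v\<in>T. (y, v) \<in> r \<Longrightarrow> card T \<le> depth P r y"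
  using finite_partial_order.card_le_height[OF converse, of T y]
  by (simp add: depth_def is_chain_converse)

lemma depth_attained:
  "y \<in> P \<Longrightarrow> \<exists>T. is_chain P r T \<and> y \<in> T \<and> (\<forall>v\<in>T. (y, v) \<in> r) \<and> card T = depth P r y"
  using finite_partial_order.height_attained[OF converse, of y]
  by (simp add: depth_def is_chain_converse)

lemma is_chain_Un_below_above:
  assumes "is_chain P r S" "is_chain P r T" "\<forall>u\<in>S. (u, x) \<in> r" "\<forall>v\<in>T. (y, v) \<in> r" "(x, y) \<in> r"
  shows "is_chain P r (S \<union> T)"
proof -
  have "(u, v) \<in> r \<or> (v, u) \<in> r" if "u \<in> S" "v \<in> T" for u v
    using assms(3-5) that transitive by blast
  then show ?thesis using assms(1,2) unfolding is_chain_def by blast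
qed

lemma below_above_disjoint:
  assumes "\<forall>u\<in>S. (u, x) \<in> r" "\<forall>v\<in>T. (y, v) \<in> r" "(x, y) \<in> r" "x \<noteq> y"
  shows "S \<inter> T = {}"
  using assms transitive antisymmetric by blast

lemma height_add_depth_le_max_chain_through:
  assumes "(x, y) \<in> r" "x \<noteq> y"
  shows "height P r x + depth P r y \<le> max_chain_through P r x"
proof -
  obtain S where S: "is_chain P r S" "x \<in> S" "\<forall>u\<in>S. (u, x) \<in> r" "card S = height P r x"
    using height_attained related_in_carrier[OF assms(1)] by blast
  obtain T where T: "is_chain P r T" "y \<in> T" "\<forall>v\<in>T. (y, v) \<in> r" "card T = depth P r y"
    using depth_attained related_in_carrier[OF assms(1)] by blast
  have "card (S \<union> T) = card S + card T"
    using below_above_disjoint[OF S(3) T(3) assms] finite_chain S(1) T(1) by (simp add: card_Un_disjoint)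
  moreover have "card (S \<union> T) \<le> max_chain_through P r x"
    using is_chain_Un_below_above[OF S(1) T(1) S(3) T(3) assms(1)] S(2)
    by (intro card_le_max_chain_through) auto
  ultimately show ?thesis using S(4) T(4) by simp
qed

lemma height_less:
  assumes "(x, y) \<in> r" "x \<noteq> y"
  shows "height P r x < height P r y"
proof -
  obtain S where S: "is_chain P r S" "x \<in> S" "\<forall>u\<in>S. (u, x) \<in> r" "card S = height P r x"
    using height_attained related_in_carrier[OF assms(1)] by blast
  have y: "y \<in> P" using related_in_carrier[OF assms(1)] by blast
  have "card (S \<union> {y}) = card S + 1"
    using below_above_disjoint[OF S(3) _ assms, of "{y}"] reflexive[OF y] finite_chain[OF S(1)] by simp
  moreover have "card (S \<union> {y}) \<le> height P r y"
    using is_chain_Un_below_above[OF S(1) is_chain_singleton[OF y] S(3) _ assms(1)] reflexive[OF y]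
      S(3) transitive[OF _ assms(1)] by (intro card_le_height) auto
  ultimately show ?thesis using S(4) by simp
qed

text \<open>Split a longest chain through y at y; the two parts share only y.\<close>

lemma max_chain_through_le_height_add_depth:
  assumes "y \<in> P"
  shows "max_chain_through P r y + 1 \<le> height P r y + depth P r y"
proof -
  obtain K where K: "is_chain P r K" "y \<in> K" "card K = max_chain_through P r y"
    using max_chain_through_attained[OF assms] by blast
  define K1 where "K1 = {z\<in>K. (z, y) \<in> r}"
  define K2 where "K2 = {z\<in>K. (y, z) \<in> r}"
  have chains: "is_chain P r K1" "is_chain P r K2"
    using K(1) unfolding K1_def K2_def is_chain_def by blast+
  have "K1 \<union> K2 = K" using K(1,2) unfolding K1_def K2_def is_chain_def by blast
  moreover have "K1 \<inter> K2 = {y}" using K(2) reflexive[OF assms] antisymmetric unfolding K1_def K2_def by blast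
  ultimately have "card K + 1 = card K1 + card K2"
    using card_Un_Int[of K1 K2] finite_chain chains by simp
  moreover have "card K1 \<le> height P r y" "card K2 \<le> depth P r y"
    using chains K(2) reflexive[OF assms]
    by (auto intro!: card_le_height card_le_depth simp: K1_def K2_def)
  ultimately show ?thesis using K(3) by linarith
qed

text \<open>The inequality h(x)/C(x) \<le> (h(y) - 1)/C(y) for x < y, cleared of denominators.\<close>

lemma height_mult_max_chain_through_le:
  assumes "(x, y) \<in> r" "x \<noteq> y"
  shows "height P r x * max_chain_through P r y \<le> (height P r y - 1) * max_chain_through P r x"
  using assms related_in_carrier[OF assms(1)]
  by (intro mult_le_pred_mult_of_bounds[where d = "depth P r y"] height_less
      height_le_max_chain_through max_chain_through_le_height_add_depth
      height_add_depth_le_max_chain_through) auto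

end

theorem corollary10:
  fixes P :: "'a set" and r :: "'a rel"
  assumes "finite P" and "partial_order_on P r"
  shows "(\<Sum>x\<in>P. 1 / (real (max_antichain_through P r x) * real (max_chain_through P r x))) \<le> 1"
proof -
  interpret finite_partial_order P r using assms by unfold_locales
  define C where "C = max_chain_through P r"
  define A where "A = max_antichain_through P r"
  define M where "M = (\<Prod>x\<in>P. C x)"
  define I where "I x = scaled_interval M (height P r x) (C x)" for x
  have C: "\<And>x. x \<in> P \<Longrightarrow> C x dvd M \<and> 0 < C x"
    unfolding C_def M_def using finite max_chain_through_pos by auto
  have M: "0 < M" unfolding M_def using C finite by (simp add: prod_pos)
  have "I x \<inter> I y = {}" if "(x, y) \<in> r" "x \<noteq> y" for x y
    using related_in_carrier[OF that(1)] C height_mult_max_chain_through_le[OF that]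
    unfolding I_def C_def by (intro scaled_intervals_disjoint[OF _ _ M]) auto
  then have antichains: "is_antichain P r {x\<in>P. k \<in> I x}" for k
    unfolding is_antichain_def by blast
  have "I x \<subseteq> {..<M}" if "x \<in> P" for x
    unfolding I_def using C[OF that] height_le_max_chain_through[OF that]
    by (intro scaled_interval_subset) (auto simp: C_def)
  then have "(\<Sum>x\<in>P. real (card (I x)) * (1 / real (A x))) \<le> real M"
    using finite antichains card_le_max_antichain_through
    by (intro sum_card_mult_le_by_double_counting sum_inverse_le_1) (auto simp: A_def)
  moreover have "real (card (I x)) * (1 / real (A x)) = real M * (1 / (real (A x) * real (C x)))"
    if "x \<in> P" for x
    using C[OF that] height_pos[OF that] by (auto simp: I_def card_scaled_interval real_of_nat_div)
  then have "(\<Sum>x\<in>P. real (card (I x)) * (1 / real (A x)))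
      = real M * (\<Sum>x\<in>P. 1 / (real (A x) * real (C x)))"
    unfolding sum_distrib_left by (rule sum.cong[OF refl])
  ultimately show ?thesis
    using M unfolding A_def C_def by simp
qed

end
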